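(* Let $k\leq n$ be positive integers. Suppose that for every $v\in\mathbb{R}^n$ with pairwise distinct coordinates not summing to $0$, and every hyperplane $H\subset\mathbb{R}^n$ through the origin, $|H\cap S_nv|\leq n!/k$. Then for every $m\geq n$, every $v\in\mathbb{R}^m$ with pairwise distinct coordinates not summing to $0$, and every hyperplane $H\subset\mathbb{R}^m$ through the origin, $|H\cap S_mv|\leq m!/k$. In particular, if $n\geq 3$ is odd and $\max_{v,H}|H\cap S_nv|=(n-1)!$ (maximum over $v\in\mathbb{R}^n$ with distinct coordinates not summing to $0$ and hyperplanes $H$ through the origin), then $\max_{v,H}|H\cap S_{n+1}v|=(n+1)(n-1)!$ (maximum over $v\in\mathbb{R}^{n+1}$ with distinct coordinates not summing to $0$ and hyperplanes $H\subset\mathbb{R}^{n+1}$ through the origin).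
   Context: The symmetric group $S_n$ acts on $\mathbb{R}^n$ by permuting coordinates; $S_nv$ denotes the orbit of $v$. *)

theory Defs
  imports "HOL-Combinatorics.Permutations" Complex_Main
begin

text \<open>Vectors in R^n are represented as functions nat => real; only the
  coordinates 0..n-1 are relevant.\<close>

definition admissible :: "nat \<Rightarrow> (nat \<Rightarrow> real) \<Rightarrow> bool" where
  "admissible n v \<longleftrightarrow> inj_on v {..<n} \<and> (\<Sum>i<n. v i) \<noteq> 0"

definition orbit :: "nat \<Rightarrow> (nat \<Rightarrow> real) \<Rightarrow> (nat \<Rightarrow> real) set" where
  "orbit n v = {(\<lambda>i. v (\<sigma> i)) | \<sigma>. \<sigma> permutes {..<n}}"

definition hyperplane :: "nat \<Rightarrow> (nat \<Rightarrow> real) \<Rightarrow> (nat \<Rightarrow> real) set" where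
  "hyperplane n a = {x. (\<Sum>i<n. a i * x i) = 0}"

definition nonzero_normal :: "nat \<Rightarrow> (nat \<Rightarrow> real) \<Rightarrow> bool" where
  "nonzero_normal n a \<longleftrightarrow> (\<exists>i<n. a i \<noteq> 0)"

definition orbit_bound :: "nat \<Rightarrow> nat \<Rightarrow> bool" where
  "orbit_bound n k \<longleftrightarrow> (\<forall>v a. admissible n v \<and> nonzero_normal n a \<longrightarrow>
      real (card (hyperplane n a \<inter> orbit n v)) \<le> fact n / real k)"

definition max_hit :: "nat \<Rightarrow> nat" where
  "max_hit n = Max {card (hyperplane n a \<inter> orbit n v) | v a.
      admissible n v \<and> nonzero_normal n a}"

end

theory Submission
  imports Defs
begin

text \<open>For v in R^(m+1), split S_(m+1)v according to the value
  v_l placed in the last coordinate: each of the m+1 pieces is a copy of S_m(v') for a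
  vector v' with distinct coordinates, cut by the affine hyperplane
  b_0 x_0 + ... + b_(m-1) x_(m-1) = -b_m v_l. Shifting all coordinates of v' by a common
  constant makes its coordinate sum nonzero, and since the coordinate sum is constant on
  the orbit, the affine condition becomes a linear one; so each piece has at most m!/k
  points, provided the normal is not constant on the first m coordinates, which a
  permutation of the coordinates arranges. Summing gives (m+1)!/k.

  For the second claim, the hyperplane x_0 + x_1 = N - 1 meets the orbit of (0, 1, ..., N-1)
  in N (N-2)! points when N is even, which matches the bound (n+1)!/n for N = n + 1.\<close>

lemma orbit_eq_image: "orbit n v = (\<lambda>\<sigma> i. v (\<sigma> i)) ` {\<sigma>. \<sigma> permutes {..<n}}"
  unfolding orbit_def by auto

lemma finite_orbit [simp]: "finite (orbit n v)"
  unfolding orbit_eq_image by (simp add: finite_permutations)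

lemma card_orbit_le_fact: "card (orbit n v) \<le> fact n"
proof -
  have "card (orbit n v) \<le> card {\<sigma>. \<sigma> permutes {..<n}}"
    unfolding orbit_eq_image by (rule card_image_le) (simp add: finite_permutations)
  also have "\<dots> = fact n" by (simp add: card_permutations)
  finally show ?thesis .
qed

lemma card_hyperplane_inter_orbit_le_fact: "card (hyperplane n a \<inter> orbit n v) \<le> fact n"
  using card_mono[OF finite_orbit Int_lower2] card_orbit_le_fact order_trans by blast

lemma sum_orbit: "x \<in> orbit n v \<Longrightarrow> (\<Sum>i<n. x i) = (\<Sum>i<n. v i)"
  unfolding orbit_def by (auto simp: sum.permute[symmetric, unfolded comp_def])

lemma orbit_comp_permutes:
  assumes "x \<in> orbit n v" "\<pi> permutes {..<n}"
  shows "x \<circ> \<pi> \<in> orbit n v"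
proof -
  obtain \<sigma> where "\<sigma> permutes {..<n}" "x = (\<lambda>i. v (\<sigma> i))"
    using assms(1) unfolding orbit_def by auto
  then show ?thesis
    unfolding orbit_def using permutes_compose[OF assms(2)] by (auto simp: comp_def)
qed

lemma card_hyperplane_orbit_le_permute_normal:
  assumes "\<pi> permutes {..<n}"
  shows "card (hyperplane n a \<inter> orbit n v) \<le> card (hyperplane n (a \<circ> \<pi>) \<inter> orbit n v)"
proof -
  have "inj (\<lambda>x. x \<circ> \<pi>)"
    using permutes_surj[OF assms] by (simp add: inj_def surj_fun_eq)
  moreover have "(\<lambda>x. x \<circ> \<pi>) ` (hyperplane n a \<inter> orbit n v) \<subseteq> hyperplane n (a \<circ> \<pi>) \<inter> orbit n v"
    using orbit_comp_permutes[OF _ assms] sum.permute[OF assms, of "\<lambda>i. a i * _ i"]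
    by (auto simp: hyperplane_def comp_def)
  ultimately show ?thesis
    by (intro card_inj_on_le[OF inj_on_subset]) auto
qed

lemma hyperplane_inter_orbit_empty_if_constant_normal:
  assumes "\<forall>i<n. a i = c" "c \<noteq> 0" "(\<Sum>i<n. v i) \<noteq> 0"
  shows "hyperplane n a \<inter> orbit n v = {}"
proof (intro equals0I)
  fix x assume x: "x \<in> hyperplane n a \<inter> orbit n v"
  have "(\<Sum>i<n. a i * x i) = c * (\<Sum>i<n. x i)"
    using assms(1) by (simp add: sum_distrib_left)
  also have "\<dots> = c * (\<Sum>i<n. v i)"
    using x sum_orbit by auto
  finally show False using x assms(2,3) by (simp add: hyperplane_def)
qed

lemma card_affine_section_orbit_le:
  assumes bound: "orbit_bound m k" and inj: "inj_on y {..<m}"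
    and nonconst: "i < m" "j < m" "a i \<noteq> a j"
  shows "real (card {x \<in> orbit m y. (\<Sum>i<m. a i * x i) = e}) \<le> fact m / real k"
proof -
  define S where "S = (\<Sum>i<m. y i)"
  define s :: real where "s = (if S = 0 then 1 else 0)"
  define y' where "y' = (\<lambda>i. y i + s)"
  define T where "T = S + real m * s"
  have T_sum: "T = (\<Sum>i<m. y' i)"
    unfolding T_def S_def y'_def by (simp add: sum.distrib)
  have "T \<noteq> 0"
    unfolding T_def s_def using nonconst by auto
  define A where "A = (\<Sum>i<m. a i)"
  define c where "c = (e + s * A) / T"
  define a' where "a' = (\<lambda>i. a i - c)"
  have "admissible m y'"
    using inj \<open>T \<noteq> 0\<close> unfolding admissible_def T_sum y'_def inj_on_def by auto
  moreover have "nonzero_normal m a'"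
    unfolding nonzero_normal_def a'_def using nonconst by (metis eq_iff_diff_eq_0)
  ultimately have bound': "real (card (hyperplane m a' \<inter> orbit m y')) \<le> fact m / real k"
    using bound unfolding orbit_bound_def by blast
  define shift where "shift = (\<lambda>(x::nat\<Rightarrow>real) i. x i + s)"
  have "inj shift"
    unfolding shift_def inj_def fun_eq_iff by auto
  moreover have "shift ` {x \<in> orbit m y. (\<Sum>i<m. a i * x i) = e} \<subseteq> hyperplane m a' \<inter> orbit m y'"
  proof (rule image_subsetI)
    fix x assume "x \<in> {x \<in> orbit m y. (\<Sum>i<m. a i * x i) = e}"
    then have x: "x \<in> orbit m y" "(\<Sum>i<m. a i * x i) = e"
      by auto
    then obtain \<sigma> where "\<sigma> permutes {..<m}" "x = (\<lambda>i. y (\<sigma> i))"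
      unfolding orbit_def by auto
    then have "shift x \<in> orbit m y'"
      unfolding orbit_def shift_def y'_def by auto
    have "(\<Sum>i<m. a' i * shift x i) = (\<Sum>i<m. a i * x i) + s * A - c * ((\<Sum>i<m. x i) + real m * s)"
      unfolding a'_def shift_def A_def
      by (simp add: algebra_simps sum.distrib sum_subtractf sum_distrib_left)
    also have "\<dots> = 0"
      unfolding x(2) sum_orbit[OF x(1)] S_def[symmetric] T_def[symmetric] c_def
      using \<open>T \<noteq> 0\<close> by simp
    finally show "shift x \<in> hyperplane m a' \<inter> orbit m y'"
      using \<open>shift x \<in> orbit m y'\<close> unfolding hyperplane_def by simp
  qed
  ultimately have "card {x \<in> orbit m y. (\<Sum>i<m. a i * x i) = e} \<le> card (hyperplane m a' \<inter> orbit m y')"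
    by (intro card_inj_on_le[OF inj_on_subset]) auto
  with bound' show ?thesis by linarith
qed

lemma orbit_Suc_fiber:
  assumes "x \<in> orbit (Suc m) v"
  shows "\<exists>l<Suc m. x \<in> orbit m (v \<circ> transpose l m) \<and> x m = v l"
proof -
  obtain \<sigma> where \<sigma>: "\<sigma> permutes {..<Suc m}" "x = (\<lambda>i. v (\<sigma> i))"
    using assms unfolding orbit_def by auto
  define l where "l = \<sigma> m"
  have "l < Suc m"
    unfolding l_def using permutes_in_image[OF \<sigma>(1)] by auto
  define \<tau> where "\<tau> = transpose l m \<circ> \<sigma>"
  have \<tau>_perm: "\<tau> permutes {..<Suc m}"
    unfolding \<tau>_def using \<open>l < Suc m\<close> by (intro permutes_compose[OF \<sigma>(1)] permutes_swap_id) auto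
  have "\<tau> m = m"
    unfolding \<tau>_def l_def by simp
  then have "\<tau> permutes {..<m}"
    by (intro permutes_superset[OF \<tau>_perm]) (auto simp: less_Suc_eq)
  moreover have "x = (\<lambda>i. (v \<circ> transpose l m) (\<tau> i))"
    unfolding \<tau>_def \<sigma>(2) by (simp add: fun_eq_iff)
  ultimately have "x \<in> orbit m (v \<circ> transpose l m)"
    unfolding orbit_def by blast
  moreover have "x m = v l"
    unfolding \<sigma>(2) l_def ..
  ultimately show ?thesis
    using \<open>l < Suc m\<close> by blast
qed

lemma card_hyperplane_orbit_Suc_le:
  assumes bound: "orbit_bound m k" and inj: "inj_on v {..<Suc m}"
    and nonconst: "i < m" "j < m" "b i \<noteq> b j"
  shows "real (card (hyperplane (Suc m) b \<inter> orbit (Suc m) v)) \<le> fact (Suc m) / real k"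
proof -
  define fiber where
    "fiber l = {x \<in> orbit m (v \<circ> transpose l m). (\<Sum>i<m. b i * x i) = - (b m * v l)}" for l
  have "hyperplane (Suc m) b \<inter> orbit (Suc m) v \<subseteq> (\<Union>l<Suc m. fiber l)"
  proof
    fix x assume x: "x \<in> hyperplane (Suc m) b \<inter> orbit (Suc m) v"
    then obtain l where l: "l < Suc m" "x \<in> orbit m (v \<circ> transpose l m)" "x m = v l"
      using orbit_Suc_fiber by blast
    have "(\<Sum>i<Suc m. b i * x i) = 0"
      using x unfolding hyperplane_def by auto
    then show "x \<in> (\<Union>l<Suc m. fiber l)"
      unfolding fiber_def using l by auto
  qed
  then have "card (hyperplane (Suc m) b \<inter> orbit (Suc m) v) \<le> card (\<Union>l<Suc m. fiber l)"
    by (rule card_mono[rotated]) (simp add: fiber_def)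
  also have "\<dots> \<le> (\<Sum>l<Suc m. card (fiber l))"
    by (rule card_UN_le) simp
  finally have "real (card (hyperplane (Suc m) b \<inter> orbit (Suc m) v)) \<le> (\<Sum>l<Suc m. real (card (fiber l)))"
    by (simp only: of_nat_le_iff flip: of_nat_sum)
  also have "\<dots> \<le> (\<Sum>l<Suc m. fact m / real k)"
  proof (rule sum_mono)
    fix l assume "l \<in> {..<Suc m}"
    then have "transpose l m ` {..<m} \<subseteq> {..<Suc m}"
      by (auto simp: transpose_def)
    then have "inj_on (v \<circ> transpose l m) {..<m}"
      by (rule comp_inj_on[OF inj_on_subset[OF inj_transpose subset_UNIV] inj_on_subset[OF inj]])
    then show "real (card (fiber l)) \<le> fact m / real k"
      unfolding fiber_def using card_affine_section_orbit_le[OF bound _ nonconst] by blast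
  qed
  also have "\<dots> = fact (Suc m) / real k"
    by (simp add: fact_Suc)
  finally show ?thesis .
qed

lemma orbit_bound_Suc:
  assumes bound: "orbit_bound m k" and "0 < k" "k \<le> m"
  shows "orbit_bound (Suc m) k"
  unfolding orbit_bound_def
proof (intro allI impI, elim conjE)
  fix v a assume adm: "admissible (Suc m) v" and nz: "nonzero_normal (Suc m) a"
  show "real (card (hyperplane (Suc m) a \<inter> orbit (Suc m) v)) \<le> fact (Suc m) / real k"
  proof (cases "\<forall>i<Suc m. a i = a 0")
    case True
    obtain i where "i < Suc m" "a i \<noteq> 0"
      using nz unfolding nonzero_normal_def by blast
    with True have "a 0 \<noteq> 0"
      by metis
    moreover have "(\<Sum>i<Suc m. v i) \<noteq> 0"
      using adm unfolding admissible_def by blast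
    ultimately have "hyperplane (Suc m) a \<inter> orbit (Suc m) v = {}"
      using hyperplane_inter_orbit_empty_if_constant_normal[OF True] by blast
    then show ?thesis by simp
  next
    case False
    then obtain i where i: "i < Suc m" "a i \<noteq> a 0" by blast
    show ?thesis
    proof (cases "k = 1")
      case True
      have "real (card (hyperplane (Suc m) a \<inter> orbit (Suc m) v)) \<le> real (fact (Suc m))"
        using card_hyperplane_inter_orbit_le_fact by (simp only: of_nat_le_iff)
      with True show ?thesis
        by (simp del: fact_Suc)
    next
      case False
      with assms have "2 \<le> m" by linarith
      \<comment> \<open>swap a coordinate other than 0 and i into the last position, so that two
        distinct entries of the normal survive among the first m\<close>
      define p where "p = (if i = 1 then 2 else (1::nat))"
      define \<pi> where "\<pi> = transpose p m"
      have \<pi>_perm: "\<pi> permutes {..<Suc m}"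
        unfolding \<pi>_def p_def using \<open>2 \<le> m\<close> by (intro permutes_swap_id) auto
      have "\<pi> i < m" "\<pi> 0 < m"
        unfolding \<pi>_def p_def using i \<open>2 \<le> m\<close> by (auto simp: transpose_def)
      moreover have "(a \<circ> \<pi>) (\<pi> i) \<noteq> (a \<circ> \<pi>) (\<pi> 0)"
        unfolding \<pi>_def using i by simp
      moreover have "inj_on v {..<Suc m}"
        using adm unfolding admissible_def by blast
      ultimately have "real (card (hyperplane (Suc m) (a \<circ> \<pi>) \<inter> orbit (Suc m) v)) \<le> fact (Suc m) / real k"
        using card_hyperplane_orbit_Suc_le[OF bound] by blast
      then show ?thesis
        using card_hyperplane_orbit_le_permute_normal[OF \<pi>_perm, of a v] by linarith
    qed
  qed
qed

lemma orbit_bound_mono: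
  assumes "orbit_bound n k" "0 < k" "k \<le> n" "n \<le> m"
  shows "orbit_bound m k"
  using \<open>n \<le> m\<close>
proof (induction m rule: dec_induct)
  case base
  show ?case by (fact assms(1))
next
  case (step m)
  then show ?case using assms(2,3) by (intro orbit_bound_Suc) auto
qed

lemma permutes_fixing_eq: "{p. p permutes S \<and> (\<forall>x\<in>T. p x = x)} = {p. p permutes (S - T)}"
proof (intro set_eqI iffI; clarify)
  fix p assume p: "p permutes S" "\<forall>x\<in>T. p x = x"
  show "p permutes (S - T)"
    by (rule permutes_superset[OF p(1)]) (use p(2) in auto)
next
  fix p assume p: "p permutes (S - T)"
  then show "p permutes S \<and> (\<forall>x\<in>T. p x = x)"
    using permutes_subset[OF p] permutes_not_in[OF p] by auto
qed

lemma card_permutes_fixing: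
  assumes "finite S" "T \<subseteq> S"
  shows "card {p. p permutes S \<and> (\<forall>x\<in>T. p x = x)} = fact (card S - card T)"
  unfolding permutes_fixing_eq using assms
  by (simp add: card_permutations card_Diff_subset finite_subset)

lemma card_permutes_prescribed_pair:
  assumes "finite S" "a \<in> S" "b \<in> S" "j \<in> S" "j' \<in> S" "a \<noteq> b" "j \<noteq> j'"
  shows "card {p. p permutes S \<and> p a = j \<and> p b = j'} = fact (card S - 2)"
proof -
  define u where "u = transpose a j j'"
  define \<pi> where "\<pi> = transpose a j \<circ> transpose b u"
  have "u \<in> S" "u \<noteq> a"
    unfolding u_def using assms by (auto simp: transpose_def)
  then have \<pi>: "\<pi> permutes S" "\<pi> a = j" "\<pi> b = j'"
    unfolding \<pi>_def using assms by (auto intro!: permutes_compose permutes_swap_id simp: u_def)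
  define Fix where "Fix = {q. q permutes S \<and> (\<forall>x\<in>{a, b}. q x = x)}"
  have "{p. p permutes S \<and> p a = j \<and> p b = j'} = (\<lambda>q. \<pi> \<circ> q) ` Fix"
  proof (intro set_eqI iffI)
    fix p assume p: "p \<in> {p. p permutes S \<and> p a = j \<and> p b = j'}"
    have "inv \<pi> \<circ> p \<in> Fix"
      unfolding Fix_def using p \<pi> permutes_inv[OF \<pi>(1)] permutes_inverses(2)[OF \<pi>(1)]
      by (auto intro: permutes_compose)
    moreover have "p = \<pi> \<circ> (inv \<pi> \<circ> p)"
      using permutes_inverses(1)[OF \<pi>(1)] by (simp add: fun_eq_iff)
    ultimately show "p \<in> (\<lambda>q. \<pi> \<circ> q) ` Fix" by blast
  qed (auto simp: Fix_def \<pi> intro: permutes_compose)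
  moreover have "inj_on (\<lambda>q. \<pi> \<circ> q) Fix"
  proof (rule inj_onI)
    fix q q' assume "\<pi> \<circ> q = \<pi> \<circ> q'"
    then have "(inv \<pi> \<circ> \<pi>) \<circ> q = (inv \<pi> \<circ> \<pi>) \<circ> q'"
      by (simp only: o_assoc[symmetric])
    then show "q = q'"
      by (simp only: permutes_inv_o(2)[OF \<pi>(1)] id_o)
  qed
  moreover have "card Fix = fact (card S - 2)"
    unfolding Fix_def using card_permutes_fixing[of S "{a, b}"] assms by (simp add: numeral_2_eq_2)
  ultimately show ?thesis
    by (simp add: card_image)
qed

lemma card_pair_sum_hyperplane_inter_orbit:
  assumes "even N" "2 \<le> N"
  shows "N * fact (N - 2) \<le> card (hyperplane N (\<lambda>i. (if i < 2 then real N else 0) - 2) \<inter> orbit N real)"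
proof -
  define P where "P = {\<sigma>. \<sigma> permutes {..<N} \<and> \<sigma> 0 + \<sigma> 1 = N - 1}"
  define P_at where "P_at j = {\<sigma>. \<sigma> permutes {..<N} \<and> \<sigma> 0 = j \<and> \<sigma> 1 = N - 1 - j}" for j
  have "P = (\<Union>j<N. P_at j)"
    unfolding P_def P_at_def using permutes_in_image by fastforce
  moreover have "card (P_at j) = fact (N - 2)" if "j < N" for j
  proof -
    have "j \<noteq> N - 1 - j"
      using \<open>even N\<close> that by presburger
    then show ?thesis
      unfolding P_at_def using that assms card_permutes_prescribed_pair[of "{..<N}" 0 1 j "N - 1 - j"]
      by simp
  qed
  moreover have "card (\<Union>j<N. P_at j) = (\<Sum>j<N. card (P_at j))"
    by (rule card_UN_disjoint) (auto simp: P_at_def finite_permutations)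
  ultimately have "card P = N * fact (N - 2)"
    by simp
  have sum_of_nat: "(\<Sum>i<n. real i) * 2 = real n * (real n - 1)" for n
    by (induction n) (simp_all add: algebra_simps)
  have first_two: "(\<Sum>i<n. (if i < 2 then c else 0) * x i) = c * (x 0 + x 1)"
    if "2 \<le> n" for n :: nat and c :: real and x
    using that by (induction n rule: dec_induct) (auto simp: numeral_2_eq_2 algebra_simps)
  have image_P: "(\<lambda>\<sigma> i. real (\<sigma> i)) ` P \<subseteq> hyperplane N (\<lambda>i. (if i < 2 then real N else 0) - 2) \<inter> orbit N real"
  proof (rule image_subsetI)
    fix \<sigma> assume "\<sigma> \<in> P"
    then have \<sigma>: "\<sigma> permutes {..<N}" "\<sigma> 0 + \<sigma> 1 = N - 1"
      unfolding P_def by auto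
    then have x: "(\<lambda>i. real (\<sigma> i)) \<in> orbit N real"
      unfolding orbit_def by blast
    have "(\<Sum>i<N. ((if i < 2 then real N else 0) - 2) * real (\<sigma> i))
        = (\<Sum>i<N. (if i < 2 then real N else 0) * real (\<sigma> i)) - 2 * (\<Sum>i<N. real (\<sigma> i))"
      by (simp add: algebra_simps sum_subtractf sum_distrib_left)
    also have "(\<Sum>i<N. (if i < 2 then real N else 0) * real (\<sigma> i)) = real N * real (\<sigma> 0 + \<sigma> 1)"
      using first_two[OF \<open>2 \<le> N\<close>] by simp
    also have "(\<Sum>i<N. real (\<sigma> i)) = (\<Sum>i<N. real i)"
      using sum_orbit[OF x] .
    also have "real (\<sigma> 0 + \<sigma> 1) = real N - 1"
      using \<sigma>(2) \<open>2 \<le> N\<close> by (simp add: of_nat_diff)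
    finally show "(\<lambda>i. real (\<sigma> i)) \<in> hyperplane N (\<lambda>i. (if i < 2 then real N else 0) - 2) \<inter> orbit N real"
      using x sum_of_nat[of N] unfolding hyperplane_def by simp
  qed
  have "inj_on (\<lambda>\<sigma> i. real (\<sigma> i)) P"
    by (auto simp: inj_on_def fun_eq_iff)
  from card_inj_on_le[OF this image_P] show ?thesis
    using \<open>card P = _\<close> by simp
qed

lemma exists_hyperplane_hit_even:
  assumes "even N" "4 \<le> N"
  shows "\<exists>v a. admissible N v \<and> nonzero_normal N a \<and> N * fact (N - 2) \<le> card (hyperplane N a \<inter> orbit N v)"
proof (intro exI conjI)
  show "admissible N real"
    unfolding admissible_def using assms member_le_sum[of 1 "{..<N}" real] by (auto simp: inj_on_def)
  show "nonzero_normal N (\<lambda>i. (if i < 2 then real N else 0) - 2)"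
    unfolding nonzero_normal_def using assms by (intro exI[of _ 0]) auto
  show "N * fact (N - 2) \<le> card (hyperplane N (\<lambda>i. (if i < 2 then real N else 0) - 2) \<inter> orbit N real)"
    using assms by (intro card_pair_sum_hyperplane_inter_orbit) auto
qed

lemma finite_hit_counts:
  "finite {card (hyperplane n a \<inter> orbit n v) | v a. admissible n v \<and> nonzero_normal n a}"
  by (rule finite_subset[of _ "{..fact n}"]) (auto simp: card_hyperplane_inter_orbit_le_fact)

lemma orbit_bound_if_max_hit_le:
  assumes "real (max_hit n) \<le> fact n / real k"
  shows "orbit_bound n k"
  unfolding orbit_bound_def
proof (intro allI impI, elim conjE)
  fix v a assume "admissible n v" "nonzero_normal n a"
  then have "card (hyperplane n a \<inter> orbit n v) \<le> max_hit n"
    unfolding max_hit_def by (intro Max_ge[OF finite_hit_counts]) blast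
  with assms show "real (card (hyperplane n a \<inter> orbit n v)) \<le> fact n / real k"
    by (meson of_nat_le_iff order_trans)
qed

lemma max_hit_eq_if_orbit_bound_attained:
  assumes "orbit_bound n k" "fact n / real k = real c"
    and "\<exists>v a. admissible n v \<and> nonzero_normal n a \<and> c \<le> card (hyperplane n a \<inter> orbit n v)"
  shows "max_hit n = c"
proof (rule antisym)
  have "card (hyperplane n a \<inter> orbit n v) \<le> c" if "admissible n v" "nonzero_normal n a" for v a
    using assms(1,2) that unfolding orbit_bound_def by (metis of_nat_le_iff)
  with assms(3) show "max_hit n \<le> c"
    unfolding max_hit_def by (subst Max_le_iff[OF finite_hit_counts]) auto
  from assms(3) show "c \<le> max_hit n"
    unfolding max_hit_def using Max_ge[OF finite_hit_counts] order_trans by blast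
qed

theorem proposition1p7:
  shows "(\<forall>n k. 0 < k \<and> k \<le> n \<and> orbit_bound n k \<longrightarrow> (\<forall>m\<ge>n. orbit_bound m k))
    \<and> (\<forall>n. 3 \<le> n \<and> odd n \<and> max_hit n = fact (n - 1)
          \<longrightarrow> max_hit (n + 1) = (n + 1) * fact (n - 1))"
proof (intro conjI allI impI)
  fix n k m :: nat
  assume "0 < k \<and> k \<le> n \<and> orbit_bound n k" "n \<le> m"
  then show "orbit_bound m k"
    using orbit_bound_mono by blast
next
  fix n :: nat
  assume n: "3 \<le> n \<and> odd n \<and> max_hit n = fact (n - 1)"
  have fact_n: "fact n / real n = real (fact (n - 1))"
    using n by (cases n) auto
  have "orbit_bound n n"
    using n fact_n by (intro orbit_bound_if_max_hit_le) simp
  then have "orbit_bound (n + 1) n"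
    by (rule orbit_bound_mono) (use n in auto)
  moreover have "fact (n + 1) / real n = real ((n + 1) * fact (n - 1))"
    using fact_n by (metis fact_Suc Suc_eq_plus1 of_nat_mult of_nat_fact times_divide_eq_right)
  moreover have "\<exists>v a. admissible (n + 1) v \<and> nonzero_normal (n + 1) a
      \<and> (n + 1) * fact (n - 1) \<le> card (hyperplane (n + 1) a \<inter> orbit (n + 1) v)"
    using exists_hyperplane_hit_even[of "n + 1"] n by auto
  ultimately show "max_hit (n + 1) = (n + 1) * fact (n - 1)"
    by (rule max_hit_eq_if_orbit_bound_attained)
qed

end
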